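(* Let $G$ be a $(2K_2, HVN)$-free graph. Then $\chi(G)\le\omega(G)+3$.
   Context: All graphs are finite, simple and undirected. $2K_2$ is the disjoint union of two edges. $HVN$ is the graph consisting of a $K_4$ together with one further vertex adjacent to exactly two vertices of the $K_4$. A graph is $\mathcal F$-free if it has no induced subgraph isomorphic to a member of $\mathcal F$. $\chi$ is the chromatic number and $\omega$ the clique number. *)

theory Defs
  imports Main
begin

definition graph :: "'a set \<Rightarrow> 'a set set \<Rightarrow> bool" where
  "graph V E \<longleftrightarrow> finite V \<and> (\<forall>e\<in>E. \<exists>u v. e = {u, v} \<and> u \<in> V \<and> v \<in> V \<and> u \<noteq> v)"

definition contains_induced :: "'a set \<Rightarrow> 'a set set \<Rightarrow> 'b set \<Rightarrow> 'b set set \<Rightarrow> bool" where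
  "contains_induced V E VH EH \<longleftrightarrow>
     (\<exists>f. inj_on f VH \<and> f ` VH \<subseteq> V \<and>
          (\<forall>x\<in>VH. \<forall>y\<in>VH. ({f x, f y} \<in> E \<longleftrightarrow> {x, y} \<in> EH)))"

definition twoK2_V :: "nat set" where "twoK2_V = {0, 1, 2, 3}"
definition twoK2_E :: "nat set set" where "twoK2_E = {{0, 1}, {2, 3}}"

definition HVN_V :: "nat set" where "HVN_V = {0, 1, 2, 3, 4}"
definition HVN_E :: "nat set set" where
  "HVN_E = {{0, 1}, {0, 2}, {0, 3}, {1, 2}, {1, 3}, {2, 3}, {4, 0}, {4, 1}}"

definition proper_colouring :: "'a set \<Rightarrow> 'a set set \<Rightarrow> ('a \<Rightarrow> nat) \<Rightarrow> nat \<Rightarrow> bool" where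
  "proper_colouring V E c k \<longleftrightarrow>
     (\<forall>v\<in>V. c v < k) \<and> (\<forall>u\<in>V. \<forall>v\<in>V. {u, v} \<in> E \<longrightarrow> c u \<noteq> c v)"

definition chromatic_number :: "'a set \<Rightarrow> 'a set set \<Rightarrow> nat" where
  "chromatic_number V E = (LEAST k. \<exists>c. proper_colouring V E c k)"

definition clique :: "'a set \<Rightarrow> 'a set set \<Rightarrow> 'a set \<Rightarrow> bool" where
  "clique V E K \<longleftrightarrow> K \<subseteq> V \<and> (\<forall>u\<in>K. \<forall>v\<in>K. u \<noteq> v \<longrightarrow> {u, v} \<in> E)"

definition clique_number :: "'a set \<Rightarrow> 'a set set \<Rightarrow> nat" where
  "clique_number V E = Max {card K | K. clique V E K}"

end

theory Submission
  imports Defs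
begin

text \<open>Fix a maximum clique K and let N(x) be the set of vertices of K not adjacent to x; N(x) is
  nonempty by maximality, and N(x) = {x} for x in K. The vertices with |N(x)| = 1 receive the colour
  of their unique non-neighbour in K: two adjacent such vertices sharing a non-neighbour z would
  extend K - {z} to a larger clique. A vertex with |N(x)| \<ge> 2 has at most one neighbour in K, since
  two neighbours and two non-neighbours in K induce HVN. So it misses two of any three fixed
  vertices of K (all of K if |K| = 2), and sorting these vertices by such a missed pair gives three
  independent classes: an edge inside a class would induce 2K2 with the pair.\<close>

lemma graph_edgeD:
  assumes "graph V E" "{x, y} \<in> E"
  shows "x \<in> V" "y \<in> V" "x \<noteq> y"
proof -
  obtain u v where "{x, y} = {u, v}" "u \<in> V" "v \<in> V" "u \<noteq> v"
    using assms unfolding graph_def by blast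
  then show "x \<in> V" "y \<in> V" "x \<noteq> y" by (auto simp: doubleton_eq_iff)
qed

lemma graph_no_loop: "graph V E \<Longrightarrow> {x} \<notin> E"
  using graph_edgeD[of V E x x] by auto

lemma contains_induced_2K2I:
  assumes g: "graph V E" and V: "a \<in> V" "b \<in> V" "c \<in> V" "d \<in> V"
    and e: "{a, b} \<in> E" "{c, d} \<in> E"
    and n: "{a, c} \<notin> E" "{a, d} \<notin> E" "{b, c} \<notin> E" "{b, d} \<notin> E"
  shows "contains_induced V E twoK2_V twoK2_E"
proof -
  have "a \<noteq> b" "c \<noteq> d" "a \<noteq> c" "a \<noteq> d" "b \<noteq> c" "b \<noteq> d"
    using graph_edgeD(3)[OF g e(1)] graph_edgeD(3)[OF g e(2)] e n by (auto simp: insert_commute)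
  moreover have "\<And>x. {x} \<notin> E" using graph_no_loop[OF g] .
  moreover define f where "f = (\<lambda>n::nat. if n = 0 then a else if n = 1 then b else if n = 2 then c else d)"
  ultimately show ?thesis
    unfolding contains_induced_def using e n V
    by (intro exI[of _ f])
      (auto simp: f_def twoK2_V_def twoK2_E_def inj_on_def doubleton_eq_iff insert_commute)
qed

lemma contains_induced_HVNI:
  assumes g: "graph V E" and V: "a \<in> V" "b \<in> V" "c \<in> V" "d \<in> V" "x \<in> V"
    and e: "{a, b} \<in> E" "{a, c} \<in> E" "{a, d} \<in> E" "{b, c} \<in> E" "{b, d} \<in> E" "{c, d} \<in> E"
      "{x, a} \<in> E" "{x, b} \<in> E"
    and n: "{x, c} \<notin> E" "{x, d} \<notin> E"
  shows "contains_induced V E HVN_V HVN_E"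
proof -
  have "a \<noteq> b" "a \<noteq> c" "a \<noteq> d" "b \<noteq> c" "b \<noteq> d" "c \<noteq> d" "x \<noteq> a" "x \<noteq> b" "x \<noteq> c" "x \<noteq> d"
    using graph_edgeD(3)[OF g] e n by (auto simp: insert_commute)
  moreover have "\<And>x. {x} \<notin> E" using graph_no_loop[OF g] .
  moreover define f where
    "f = (\<lambda>n::nat. if n = 0 then a else if n = 1 then b else if n = 2 then c else if n = 3 then d else x)"
  ultimately show ?thesis
    unfolding contains_induced_def using e n V
    by (intro exI[of _ f])
      (auto simp: f_def HVN_V_def HVN_E_def inj_on_def doubleton_eq_iff insert_commute)
qed

lemma finite_clique_cards:
  assumes "graph V E"
  shows "finite {card K | K. clique V E K}"
proof -
  have "finite V" using assms unfolding graph_def by blast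
  then have "{card K | K. clique V E K} \<subseteq> {0..card V}"
    unfolding clique_def using card_mono by fastforce
  then show ?thesis using finite_subset by blast
qed

lemma card_le_clique_number:
  "graph V E \<Longrightarrow> clique V E K \<Longrightarrow> card K \<le> clique_number V E"
  unfolding clique_number_def using finite_clique_cards by (blast intro: Max_ge)

lemma clique_number_attained:
  assumes "graph V E"
  obtains K where "clique V E K" "card K = clique_number V E"
proof -
  have "clique V E {}" unfolding clique_def by simp
  then have "clique_number V E \<in> {card K | K. clique V E K}"
    unfolding clique_number_def using finite_clique_cards[OF assms] by (intro Max_in) auto
  then show ?thesis using that by fastforce
qed

lemma clique_finite: "graph V E \<Longrightarrow> clique V E K \<Longrightarrow> finite K"
  unfolding graph_def clique_def using finite_subset by blast

lemma clique_edge: "clique V E K \<Longrightarrow> a \<in> K \<Longrightarrow> b \<in> K \<Longrightarrow> a \<noteq> b \<Longrightarrow> {a, b} \<in> E"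
  unfolding clique_def by blast

lemma clique_insert:
  assumes "clique V E K" "x \<in> V" "\<And>v. v \<in> K \<Longrightarrow> v \<noteq> x \<Longrightarrow> {x, v} \<in> E"
  shows "clique V E (insert x K)"
  using assms unfolding clique_def by (metis insert_commute insert_iff insert_subset)

lemma chromatic_number_le: "proper_colouring V E c k \<Longrightarrow> chromatic_number V E \<le> k"
  unfolding chromatic_number_def by (blast intro: Least_le)

lemma proper_colouring_Un:
  assumes "proper_colouring A E c k" "proper_colouring B E d l"
  shows "proper_colouring (A \<union> B) E (\<lambda>x. if x \<in> A then c x else k + d x) (k + l)"
  using assms unfolding proper_colouring_def by (auto simp: insert_commute)

definition non_nbrs_in :: "'a set set \<Rightarrow> 'a set \<Rightarrow> 'a \<Rightarrow> 'a set" where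
  "non_nbrs_in E K x = {v \<in> K. {x, v} \<notin> E}"

lemma non_nbrs_in_subset: "non_nbrs_in E K x \<subseteq> K"
  unfolding non_nbrs_in_def by blast

lemma non_nbrs_inD: "v \<in> non_nbrs_in E K x \<Longrightarrow> {x, v} \<notin> E"
  unfolding non_nbrs_in_def by blast

lemma non_nbrs_in_singletonD: "non_nbrs_in E K x = {z} \<Longrightarrow> z \<in> K"
  using non_nbrs_in_subset[of E K x] by simp

lemma non_nbrs_in_clique:
  assumes "graph V E" "clique V E K" "x \<in> K"
  shows "non_nbrs_in E K x = {x}"
  using assms graph_no_loop[OF assms(1)] unfolding non_nbrs_in_def clique_def by auto

lemma non_nbrs_in_max_clique_nonempty:
  assumes g: "graph V E" and K: "clique V E K" "card K = clique_number V E" and x: "x \<in> V"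
  shows "non_nbrs_in E K x \<noteq> {}"
proof
  assume none: "non_nbrs_in E K x = {}"
  then have "x \<notin> K" using non_nbrs_in_clique[OF g K(1)] by auto
  moreover have "clique V E (insert x K)"
    using none unfolding non_nbrs_in_def by (intro clique_insert[OF K(1) x]) blast
  then have "card (insert x K) \<le> card K" using card_le_clique_number[OF g] K(2) by metis
  moreover have "finite K" using clique_finite[OF g K(1)] .
  ultimately show False by simp
qed

lemma max_clique_common_non_nbr:
  assumes g: "graph V E" and K: "clique V E K" "card K = clique_number V E"
    and x: "x \<in> V" "non_nbrs_in E K x = {z}" and y: "y \<in> V" "non_nbrs_in E K y = {z}"
  shows "{x, y} \<notin> E"
proof
  assume xy: "{x, y} \<in> E"
  have adj: "{p, v} \<in> E" if "non_nbrs_in E K p = {z}" "v \<in> K" "v \<noteq> z" for p v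
    using that unfolding non_nbrs_in_def by blast
  have outside: "p \<notin> K"
    if "non_nbrs_in E K p = {z}" "non_nbrs_in E K q = {z}" "{p, q} \<in> E" for p q
  proof
    assume "p \<in> K"
    then have "z = p" using that(1) non_nbrs_in_clique[OF g K(1)] by blast
    then have "{q, p} \<notin> E" using that(2) unfolding non_nbrs_in_def by blast
    with that(3) show False by (simp add: insert_commute)
  qed
  have "x \<notin> K" "y \<notin> K"
    using outside[OF x(2) y(2) xy] outside[OF y(2) x(2)] xy by (simp_all add: insert_commute)
  have "z \<in> K" using non_nbrs_in_singletonD[OF x(2)] .
  \<comment> \<open>exchanging z for the edge xy enlarges the clique\<close>
  have "clique V E (K - {z})" using K(1) unfolding clique_def by blast
  then have "clique V E (insert y (K - {z}))"
    using adj[OF y(2)] by (intro clique_insert[OF _ y(1)]) auto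
  then have "clique V E (insert x (insert y (K - {z})))"
    using adj[OF x(2)] xy by (intro clique_insert[OF _ x(1)]) auto
  then have "card (insert x (insert y (K - {z}))) \<le> card K"
    using card_le_clique_number[OF g] K(2) by metis
  moreover have "card (insert x (insert y (K - {z}))) = card (K - {z}) + 2"
    using \<open>x \<notin> K\<close> \<open>y \<notin> K\<close> graph_edgeD(3)[OF g xy] clique_finite[OF g K(1)] by simp
  moreover have "card (K - {z}) + 1 = card K"
    using \<open>z \<in> K\<close> clique_finite[OF g K(1)] by (metis card_Suc_Diff1 Suc_eq_plus1)
  ultimately show False by simp
qed

lemma HVN_free_clique_nbr_unique:
  assumes g: "graph V E" and hvn: "\<not> contains_induced V E HVN_V HVN_E" and K: "clique V E K"
    and x: "x \<in> V" "2 \<le> card (non_nbrs_in E K x)"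
    and a: "a \<in> K" "{x, a} \<in> E" and b: "b \<in> K" "{x, b} \<in> E"
  shows "a = b"
proof (rule ccontr)
  assume "a \<noteq> b"
  obtain c d where cd: "c \<in> non_nbrs_in E K x" "d \<in> non_nbrs_in E K x" "c \<noteq> d"
    using x(2) by (auto simp: numeral_2_eq_2 card_le_Suc_iff)
  then have "c \<in> K" "d \<in> K" "{x, c} \<notin> E" "{x, d} \<notin> E" "a \<noteq> c" "a \<noteq> d" "b \<noteq> c" "b \<noteq> d"
    using a b unfolding non_nbrs_in_def by auto
  then have "contains_induced V E HVN_V HVN_E"
    using K a b x(1) \<open>a \<noteq> b\<close> cd(3) unfolding clique_def
    by (intro contains_induced_HVNI[OF g, of a b c d x]) auto
  with hvn show False ..
qed

lemma twoK2_free_common_non_nbrs: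
  assumes g: "graph V E" and free: "\<not> contains_induced V E twoK2_V twoK2_E"
    and ab: "{a, b} \<in> E"
    and u: "{u, a} \<notin> E" "{u, b} \<notin> E" and v: "{v, a} \<notin> E" "{v, b} \<notin> E"
  shows "{u, v} \<notin> E"
  using contains_induced_2K2I[OF g _ _ _ _ _ ab u v] free graph_edgeD[OF g] ab by blast

lemma colouring_single_non_nbr:
  assumes g: "graph V E" and K: "clique V E K" "card K = clique_number V E"
  obtains c where "proper_colouring {x \<in> V. card (non_nbrs_in E K x) = 1} E c (card K)"
proof -
  have "finite K" using clique_finite[OF g K(1)] .
  then obtain h where h: "bij_betw h K {0..<card K}" using ex_bij_betw_finite_nat by blast
  let ?c = "\<lambda>x. h (the_elem (non_nbrs_in E K x))"
  have "proper_colouring {x \<in> V. card (non_nbrs_in E K x) = 1} E ?c (card K)"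
    unfolding proper_colouring_def
  proof (intro conjI ballI impI)
    fix x assume "x \<in> {x \<in> V. card (non_nbrs_in E K x) = 1}"
    then obtain z where "non_nbrs_in E K x = {z}" by (auto simp: card_1_singleton_iff)
    then show "?c x < card K" using h non_nbrs_in_singletonD by (fastforce simp: bij_betw_def)
  next
    fix x y assume x: "x \<in> {x \<in> V. card (non_nbrs_in E K x) = 1}"
      and y: "y \<in> {x \<in> V. card (non_nbrs_in E K x) = 1}" and xy: "{x, y} \<in> E"
    obtain z where z: "non_nbrs_in E K x = {z}" using x by (auto simp: card_1_singleton_iff)
    obtain z' where z': "non_nbrs_in E K y = {z'}" using y by (auto simp: card_1_singleton_iff)
    have "z \<noteq> z'" using max_clique_common_non_nbr[OF g K] x y z z' xy by auto
    moreover have "z \<in> K" "z' \<in> K" using z z' by (simp_all add: non_nbrs_in_singletonD)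
    ultimately show "?c x \<noteq> ?c y"
      using z z' bij_betw_imp_inj_on[OF h] by (simp add: inj_on_eq_iff)
  qed
  then show ?thesis using that by blast
qed

lemma colouring_many_non_nbrs:
  assumes g: "graph V E" and K: "clique V E K"
    and free2K2: "\<not> contains_induced V E twoK2_V twoK2_E"
    and freeHVN: "\<not> contains_induced V E HVN_V HVN_E"
  obtains c where "proper_colouring {x \<in> V. 2 \<le> card (non_nbrs_in E K x)} E c 3"
proof -
  let ?B = "{x \<in> V. 2 \<le> card (non_nbrs_in E K x)}"
  have no_common_pair: "{u, v} \<notin> E"
    if "a \<in> K" "b \<in> K" "a \<noteq> b" "{u, a} \<notin> E" "{u, b} \<notin> E" "{v, a} \<notin> E" "{v, b} \<notin> E"
    for a b u v
    using twoK2_free_common_non_nbrs[OF g free2K2 clique_edge[OF K that(1-3)] that(4-7)] .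
  show ?thesis
  proof (cases "3 \<le> card K")
    case True
    then obtain a0 a1 a2 where a: "a0 \<in> K" "a1 \<in> K" "a2 \<in> K" "a0 \<noteq> a1" "a0 \<noteq> a2" "a1 \<noteq> a2"
      by (auto simp: numeral_3_eq_3 card_le_Suc_iff)
    \<comment> \<open>colour i: x misses the two vertices of {a0, a1, a2} other than ai\<close>
    let ?c = "\<lambda>x. if {x, a0} \<in> E then 0 else if {x, a1} \<in> E then 1 else 2::nat"
    have misses: "(?c x = 0 \<longrightarrow> {x, a1} \<notin> E \<and> {x, a2} \<notin> E) \<and>
        (?c x = 1 \<longrightarrow> {x, a0} \<notin> E \<and> {x, a2} \<notin> E) \<and> (?c x = 2 \<longrightarrow> {x, a0} \<notin> E \<and> {x, a1} \<notin> E)"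
      if "x \<in> ?B" for x
      using HVN_free_clique_nbr_unique[OF g freeHVN K, of x] that a by auto
    have "proper_colouring ?B E ?c 3"
      unfolding proper_colouring_def
    proof (intro conjI ballI impI)
      fix u v assume u: "u \<in> ?B" and v: "v \<in> ?B" and uv: "{u, v} \<in> E"
      show "?c u \<noteq> ?c v"
      proof
        assume same: "?c u = ?c v"
        have "?c u = 0 \<or> ?c u = 1 \<or> ?c u = 2" by simp
        then show False
          using misses[OF u] misses[OF v] same uv a no_common_pair[of a1 a2 u v]
            no_common_pair[of a0 a2 u v] no_common_pair[of a0 a1 u v]
          by (elim disjE) simp_all
      qed
    qed auto
    then show ?thesis using that by blast
  next
    case False
    have "finite K" using clique_finite[OF g K] .
    have misses_all: "non_nbrs_in E K x = K \<and> card K = 2" if "x \<in> ?B" for x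
    proof -
      have "card (non_nbrs_in E K x) \<le> card K"
        using card_mono[OF \<open>finite K\<close> non_nbrs_in_subset] .
      then have "card (non_nbrs_in E K x) = card K" "card K = 2" using that False by auto
      then show ?thesis using card_subset_eq[OF \<open>finite K\<close> non_nbrs_in_subset] by auto
    qed
    have "proper_colouring ?B E (\<lambda>_. 0) 3"
      unfolding proper_colouring_def
    proof (intro conjI ballI impI)
      fix u v assume u: "u \<in> ?B" and v: "v \<in> ?B" and uv: "{u, v} \<in> E"
      obtain a b where ab: "K = {a, b}" "a \<noteq> b"
        using misses_all[OF u] by (auto simp: card_2_iff)
      then have "{u, a} \<notin> E" "{u, b} \<notin> E" "{v, a} \<notin> E" "{v, b} \<notin> E"
        using misses_all[OF u] misses_all[OF v] non_nbrs_inD by (metis insertCI)+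
      with ab uv show "(0::nat) \<noteq> 0" using no_common_pair[of a b u v] by simp
    qed auto
    then show ?thesis using that by blast
  qed
qed

theorem corollary3p8:
  fixes V :: "'a set" and E :: "'a set set"
  assumes "graph V E"
    and "\<not> contains_induced V E twoK2_V twoK2_E"
    and "\<not> contains_induced V E HVN_V HVN_E"
  shows "chromatic_number V E \<le> clique_number V E + 3"
proof -
  obtain K where K: "clique V E K" "card K = clique_number V E"
    using clique_number_attained[OF assms(1)] .
  let ?A = "{x \<in> V. card (non_nbrs_in E K x) = 1}"
  let ?B = "{x \<in> V. 2 \<le> card (non_nbrs_in E K x)}"
  have "0 < card (non_nbrs_in E K x)" if "x \<in> V" for x
    using non_nbrs_in_max_clique_nonempty[OF assms(1) K that]
      finite_subset[OF non_nbrs_in_subset clique_finite[OF assms(1) K(1)]]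
    by (simp add: card_gt_0_iff)
  then have V: "?A \<union> ?B = V" by force
  obtain cA where cA: "proper_colouring ?A E cA (card K)"
    using colouring_single_non_nbr[OF assms(1) K] .
  obtain cB where cB: "proper_colouring ?B E cB 3"
    using colouring_many_non_nbrs[OF assms(1) K(1) assms(2,3)] .
  show ?thesis
    using chromatic_number_le[OF proper_colouring_Un[OF cA cB, unfolded V]] K(2) by simp
qed

end
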